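(* Let $p\ge 5$ be a prime. Then $H^1(\mathrm{Alt}(5),X_{\{3\}})\cong C_3$ (here $p=5$), and $H^1(\mathrm{Alt}(p),D_{\{q\}})=0$ for all primes $q$ with $(p,q)\neq(5,3)$.
   Context: $\mathrm{Alt}(p)$ is identified with the group of permutation matrices of even permutations (via $\alpha\mapsto[\delta_{i\alpha,j}]_{i,j}$), acting by conjugation on the group $\mathrm{D}(p,\mathbb{C})$ of invertible diagonal matrices. $D$ is the torsion subgroup of $\mathrm{D}(p,\mathbb{C})$ and $D_{\{q\}}$ its subgroup of elements of $q$-power order. $X=\mathrm{SL}(p,\mathbb{C})\cap\mathrm{D}(p,\mathbb{C})$ and $X_{\{3\}}$ its subgroup of elements of $3$-power order (for $p=5$). *)

theory Defs
  imports Complex_Main "HOL-Algebra.Algebra" "HOL-Combinatorics.Permutations"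
begin

text \<open>It is identified with the group of permutation matrices via sigma \<mapsto> P_(sigma^-1),
  a homomorphism for \<circ>; conjugation of a diagonal matrix diag(d) by it yields
  diag(i \<mapsto> d (inv sigma i)).\<close>
definition Alt :: "nat \<Rightarrow> (nat \<Rightarrow> nat) set" where
  "Alt p = {\<sigma>. \<sigma> permutes {..<p} \<and> evenperm \<sigma>}"

text \<open>Diagonal matrices are represented by their diagonal (entries at indices < p; value 1 elsewhere).\<close>
definition act :: "(nat \<Rightarrow> nat) \<Rightarrow> (nat \<Rightarrow> complex) \<Rightarrow> (nat \<Rightarrow> complex)" where
  "act \<sigma> d = (\<lambda>i. d (Hilbert_Choice.inv \<sigma> i))"

definition Dq :: "nat \<Rightarrow> nat \<Rightarrow> (nat \<Rightarrow> complex) set" where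
  "Dq p q = {d. (\<forall>i. p \<le> i \<longrightarrow> d i = 1) \<and> (\<forall>i<p. d i \<noteq> 0) \<and>
                (\<exists>k. \<forall>i<p. d i ^ (q ^ k) = 1)}"

definition Xq :: "nat \<Rightarrow> nat \<Rightarrow> (nat \<Rightarrow> complex) set" where
  "Xq p q = {d \<in> Dq p q. (\<Prod>i<p. d i) = 1}"

definition Z1 :: "(nat \<Rightarrow> complex) set \<Rightarrow> nat \<Rightarrow> ((nat \<Rightarrow> nat) \<Rightarrow> nat \<Rightarrow> complex) set" where
  "Z1 M p = {f. (\<forall>\<sigma>\<in>Alt p. f \<sigma> \<in> M) \<and> (\<forall>\<sigma>. \<sigma> \<notin> Alt p \<longrightarrow> f \<sigma> = (\<lambda>i. 1)) \<and>
               (\<forall>\<sigma>\<in>Alt p. \<forall>\<tau>\<in>Alt p. f (\<sigma> \<circ> \<tau>) = (\<lambda>i. f \<sigma> i * act \<sigma> (f \<tau>) i))}"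

definition B1 :: "(nat \<Rightarrow> complex) set \<Rightarrow> nat \<Rightarrow> ((nat \<Rightarrow> nat) \<Rightarrow> nat \<Rightarrow> complex) set" where
  "B1 M p = {f. \<exists>m\<in>M. \<forall>\<sigma>. f \<sigma> = (if \<sigma> \<in> Alt p then (\<lambda>i. act \<sigma> m i / m i) else (\<lambda>i. 1))}"

definition Z1_group :: "(nat \<Rightarrow> complex) set \<Rightarrow> nat \<Rightarrow> ((nat \<Rightarrow> nat) \<Rightarrow> nat \<Rightarrow> complex) monoid" where
  "Z1_group M p = \<lparr>carrier = Z1 M p, monoid.mult = (\<lambda>f g \<sigma> i. f \<sigma> i * g \<sigma> i), monoid.one = (\<lambda>\<sigma> i. 1)\<rparr>"

definition H1 :: "(nat \<Rightarrow> complex) set \<Rightarrow> nat \<Rightarrow> ((nat \<Rightarrow> nat) \<Rightarrow> nat \<Rightarrow> complex) set monoid" where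
  "H1 M p = Z1_group M p Mod B1 M p"

end

(*
  Write p = n + 1. For a 1-cocycle f of Alt p with values in diagonal matrices, the last coordinate
  h |-> f(h)_n restricted to the stabiliser Alt n of the index n is a character of Alt n. By the
  cocycle form of Shapiro's lemma, f is a coboundary as soon as this character is trivial, and
  conversely every character of Alt n induces a cocycle of Alt p.

  Since the 3-cycles generate Alt n, every character has order dividing 3; for n >= 5 it is trivial,
  because a 3-cycle is conjugate to its inverse. With coefficients of q-power order the restricted
  character therefore vanishes unless n = 4 and q = 3, which gives H^1(Alt p, D_q) = 0.

  For n = 4 and q = 3, Alt 4 acts on {0,1,2,3} = F_4 by affine maps, and the linear part gives a
  character chi4 of order 3 whose kernel is the Klein four-group of translations. Hence a character
  of Alt 4 is trivial once it is trivial on the 3-cycle (0 1 2), and H^1(Alt 5, X_3) is cyclic of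
  order 3, detected by the value of a cocycle at (0 1 2) in coordinate 4. Two points are specific
  to X_3: the determinant of the cocycle induced from chi4 is a character of Alt 5, hence trivial;
  and since 5 is prime to 3, a coboundary of some m in D_3 is also the coboundary of a scalar
  multiple of m with determinant 1.
*)
theory Submission
  imports Defs "HOL-Number_Theory.Cong"
begin

section \<open>Alternating groups\<close>

lemma Alt_permutes: "\<sigma> \<in> Alt p \<Longrightarrow> \<sigma> permutes {..<p}"
  by (simp add: Alt_def)

lemma Alt_evenperm: "\<sigma> \<in> Alt p \<Longrightarrow> evenperm \<sigma>"
  by (simp add: Alt_def)

lemma Alt_id [simp]: "id \<in> Alt p"
  by (simp add: Alt_def permutes_id)

lemma Alt_comp: "\<sigma> \<in> Alt p \<Longrightarrow> \<tau> \<in> Alt p \<Longrightarrow> \<sigma> \<circ> \<tau> \<in> Alt p"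
  unfolding Alt_def
  by (auto intro: permutes_compose simp: evenperm_comp permutes_imp_permutation[OF finite_lessThan])

lemma Alt_inv: "\<sigma> \<in> Alt p \<Longrightarrow> inv' \<sigma> \<in> Alt p"
  unfolding Alt_def
  by (auto intro: permutes_inv simp: evenperm_inv permutes_imp_permutation[OF finite_lessThan])

lemma Alt_funpow: "\<sigma> \<in> Alt p \<Longrightarrow> \<sigma> ^^ k \<in> Alt p"
  by (induction k) (auto intro: Alt_comp)

lemma Alt_mono: "n \<le> p \<Longrightarrow> \<sigma> \<in> Alt n \<Longrightarrow> \<sigma> \<in> Alt p"
  unfolding Alt_def using permutes_subset[of \<sigma> "{..<n}" "{..<p}"] by auto

lemma Alt_Suc_fixing_last: "\<sigma> \<in> Alt (Suc n) \<Longrightarrow> \<sigma> n = n \<Longrightarrow> \<sigma> \<in> Alt n"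
  unfolding Alt_def using permutes_superset[of \<sigma> "{..<Suc n}" "{..<n}"]
  by (auto simp: less_Suc_eq)

lemma Alt_apply_outside: "\<sigma> \<in> Alt p \<Longrightarrow> p \<le> i \<Longrightarrow> \<sigma> i = i"
  using Alt_permutes permutes_not_in by fastforce

lemma Alt_apply_less: "\<sigma> \<in> Alt p \<Longrightarrow> i < p \<Longrightarrow> \<sigma> i < p"
  using Alt_permutes permutes_in_image by fastforce

lemma Alt_inverses: "\<sigma> \<in> Alt p \<Longrightarrow> \<sigma> (inv' \<sigma> i) = i"  "\<sigma> \<in> Alt p \<Longrightarrow> inv' \<sigma> (\<sigma> i) = i"
  using Alt_permutes permutes_inverses by fastforce+

lemma Alt_o_inv: "\<sigma> \<in> Alt p \<Longrightarrow> \<sigma> \<circ> inv' \<sigma> = id"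
  using Alt_permutes permutes_inv_o(1) by blast

lemma Alt_inv_o: "\<sigma> \<in> Alt p \<Longrightarrow> inv' \<sigma> \<circ> \<sigma> = id"
  using Alt_permutes permutes_inv_o(2) by blast

lemma Alt_inv_distrib: "\<sigma> \<in> Alt p \<Longrightarrow> \<tau> \<in> Alt p \<Longrightarrow> inv' (\<sigma> \<circ> \<tau>) = inv' \<tau> \<circ> inv' \<sigma>"
  using Alt_permutes permutes_bij o_inv_distrib by metis

lemma transpose_comp_transpose_in_Alt:
  "a < p \<Longrightarrow> b < p \<Longrightarrow> c < p \<Longrightarrow> d < p \<Longrightarrow> a \<noteq> b \<Longrightarrow> c \<noteq> d \<Longrightarrow>
   transpose a b \<circ> transpose c d \<in> Alt p"
  unfolding Alt_def
  by (auto intro!: permutes_compose permutes_swap_id simp: evenperm_comp evenperm_swap permutation_swap_id)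

lemma three_cycle_cube:
  "a \<noteq> b \<Longrightarrow> b \<noteq> c \<Longrightarrow> (transpose a b \<circ> transpose b c) ^^ 3 = id"
  by (rule ext) (auto simp: numeral_3_eq_3 transpose_def)

lemma Alt_Suc_transitive:
  assumes n: "3 \<le> n" and i: "i < Suc n"
  shows "\<exists>g\<in>Alt (Suc n). g n = i"
proof (cases "i = n")
  case False
  \<comment> \<open>a second transposition \<open>(a b)\<close> away from \<open>i\<close> and \<open>n\<close> makes \<open>(i n)\<close> even\<close>
  define a where "a = (if i = 0 then 1 else 0::nat)"
  define b where "b = (if i = 2 then 1 else 2::nat)"
  have "a \<noteq> b" "a \<noteq> i" "b \<noteq> i" "a < n" "b < n" using n by (auto simp: a_def b_def)
  then have "transpose i n \<circ> transpose a b \<in> Alt (Suc n)" "(transpose i n \<circ> transpose a b) n = i"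
    using i False by (auto intro: transpose_comp_transpose_in_Alt)
  then show ?thesis by blast
qed (metis Alt_id id_apply)

lemma transposition_pair_step:
  assumes step: "\<And>\<tau> a b c. P \<tau> \<Longrightarrow> a \<noteq> b \<Longrightarrow> b \<noteq> c \<Longrightarrow> a \<noteq> c \<Longrightarrow> a \<in> S \<Longrightarrow> b \<in> S \<Longrightarrow> c \<in> S \<Longrightarrow>
      P (\<tau> \<circ> (transpose a b \<circ> transpose b c))"
    and "P \<tau>" "a \<noteq> b" "c \<noteq> d" "a \<in> S" "b \<in> S" "c \<in> S" "d \<in> S"
  shows "P (\<tau> \<circ> transpose a b \<circ> transpose c d)"
proof -
  have cycle: "P (\<tau> \<circ> (transpose a b \<circ> transpose b c))"
    if "P \<tau>" "a \<noteq> b" "b \<noteq> c" "a \<in> S" "b \<in> S" "c \<in> S" for \<tau> a b c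
  proof (cases "a = c")
    case True
    then have "transpose a b \<circ> transpose b c = id" by (simp add: fun_eq_iff transpose_def)
    then show ?thesis using \<open>P \<tau>\<close> by simp
  qed (use that step in blast)
  show ?thesis
  proof (cases "b = c")
    case True
    then show ?thesis using cycle[of \<tau> a b d] assms(2-) by (simp add: o_assoc)
  next
    case False
    have "\<tau> \<circ> transpose a b \<circ> transpose c d =
          (\<tau> \<circ> (transpose a b \<circ> transpose b c)) \<circ> (transpose b c \<circ> transpose c d)"
      by (simp add: fun_eq_iff transpose_def)
    then show ?thesis using cycle[of \<tau> a b c] cycle[of _ b c d] assms(2-) False by simp
  qed
qed

lemma evenperm_3cycle_induct [consumes 3, case_names id cycle]:
  assumes perm: "\<sigma> permutes S" and fin: "finite S" and even: "evenperm \<sigma>" and base: "P id"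
    and step: "\<And>\<tau> a b c. P \<tau> \<Longrightarrow> a \<noteq> b \<Longrightarrow> b \<noteq> c \<Longrightarrow> a \<noteq> c \<Longrightarrow> a \<in> S \<Longrightarrow> b \<in> S \<Longrightarrow> c \<in> S \<Longrightarrow>
      P (\<tau> \<circ> (transpose a b \<circ> transpose b c))"
  shows "P \<sigma>"
proof -
  have "(evenperm \<rho> \<longrightarrow> (\<forall>\<tau>. P \<tau> \<longrightarrow> P (\<tau> \<circ> \<rho>))) \<and>
        (\<not> evenperm \<rho> \<longrightarrow> (\<forall>\<tau> a b. P \<tau> \<longrightarrow> a \<noteq> b \<longrightarrow> a \<in> S \<longrightarrow> b \<in> S \<longrightarrow> P (\<tau> \<circ> transpose a b \<circ> \<rho>)))"
    if "\<rho> permutes S" for \<rho>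
    using that fin
  proof (induction rule: permutes_induct)
    case id
    then show ?case by simp
  next
    case (swap c d \<rho>)
    have parity: "evenperm (transpose c d \<circ> \<rho>) \<longleftrightarrow> \<not> evenperm \<rho>"
      using \<open>c \<noteq> d\<close> permutes_imp_permutation[OF fin \<open>\<rho> permutes S\<close>]
      by (simp add: evenperm_comp evenperm_swap permutation_swap_id)
    show ?case
    proof (cases "evenperm \<rho>")
      case True
      have "P (\<tau> \<circ> transpose a b \<circ> (transpose c d \<circ> \<rho>))"
        if "P \<tau>" "a \<noteq> b" "a \<in> S" "b \<in> S" for \<tau> a b
      proof -
        have "P (\<tau> \<circ> transpose a b \<circ> transpose c d)"
          using transposition_pair_step[of P S, OF step] that \<open>c \<noteq> d\<close> swap.hyps(1,2) by blast
        then have "P ((\<tau> \<circ> transpose a b \<circ> transpose c d) \<circ> \<rho>)" using swap.IH True by blast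
        then show ?thesis by (simp only: o_assoc)
      qed
      then show ?thesis using parity True by blast
    next
      case False
      have "P (\<tau> \<circ> (transpose c d \<circ> \<rho>))" if "P \<tau>" for \<tau>
        using swap.IH swap.hyps False that by (metis o_assoc)
      then show ?thesis using parity False by blast
    qed
  qed
  then show ?thesis using perm even base by (metis id_o)
qed

section \<open>Characters of alternating groups\<close>

lemma power_eq_one_if_coprime_exponents:
  fixes z :: "'a :: monoid_mult"
  assumes "z ^ a = 1" "z ^ b = 1" "coprime a b" "a > 0"
  shows "z = 1"
proof -
  obtain u v where "a * u = b * v + gcd a b" using bezout_nat[of a b] assms(4) by auto
  then have uv: "a * u = b * v + 1" using assms(3) by simp
  have "z = z ^ (b * v + 1)" using assms(2) by (simp add: power_mult)
  also have "\<dots> = (z ^ a) ^ u" by (simp only: uv[symmetric] power_mult)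
  also have "\<dots> = 1" using assms(1) by simp
  finally show ?thesis .
qed

definition alt_character :: "nat \<Rightarrow> ((nat \<Rightarrow> nat) \<Rightarrow> complex) \<Rightarrow> bool" where
  "alt_character n \<psi> \<longleftrightarrow> \<psi> id = 1 \<and> (\<forall>\<sigma>\<in>Alt n. \<forall>\<tau>\<in>Alt n. \<psi> (\<sigma> \<circ> \<tau>) = \<psi> \<sigma> * \<psi> \<tau>)"

lemma alt_characterI:
  "\<psi> id = 1 \<Longrightarrow> (\<And>\<sigma> \<tau>. \<sigma> \<in> Alt n \<Longrightarrow> \<tau> \<in> Alt n \<Longrightarrow> \<psi> (\<sigma> \<circ> \<tau>) = \<psi> \<sigma> * \<psi> \<tau>) \<Longrightarrow> alt_character n \<psi>"
  by (simp add: alt_character_def)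

lemma alt_character_id: "alt_character n \<psi> \<Longrightarrow> \<psi> id = 1"
  by (simp add: alt_character_def)

lemma alt_character_comp:
  "alt_character n \<psi> \<Longrightarrow> \<sigma> \<in> Alt n \<Longrightarrow> \<tau> \<in> Alt n \<Longrightarrow> \<psi> (\<sigma> \<circ> \<tau>) = \<psi> \<sigma> * \<psi> \<tau>"
  by (simp add: alt_character_def)

lemma alt_character_funpow:
  assumes "alt_character n \<psi>" "\<sigma> \<in> Alt n"
  shows "\<psi> (\<sigma> ^^ k) = \<psi> \<sigma> ^ k"
proof (induction k)
  case (Suc k)
  have "\<psi> (\<sigma> ^^ Suc k) = \<psi> (\<sigma> \<circ> \<sigma> ^^ k)" by simp
  also have "\<dots> = \<psi> \<sigma> ^ Suc k" using assms Suc by (simp add: alt_character_comp Alt_funpow)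
  finally show ?case .
qed (simp only: funpow.simps(1) power_0 alt_character_id[OF assms(1)])

lemma alt_character_power:
  "alt_character n \<psi> \<Longrightarrow> alt_character n (\<lambda>\<sigma>. \<psi> \<sigma> ^ k)"
  by (simp add: alt_character_def power_mult_distrib)

lemma alt_character_trivial_if_3cycles:
  assumes \<psi>: "alt_character n \<psi>" and \<sigma>: "\<sigma> \<in> Alt n"
    and cycles: "\<And>a b c. a < n \<Longrightarrow> b < n \<Longrightarrow> c < n \<Longrightarrow> a \<noteq> b \<Longrightarrow> b \<noteq> c \<Longrightarrow> a \<noteq> c \<Longrightarrow>
      \<psi> (transpose a b \<circ> transpose b c) = 1"
  shows "\<psi> \<sigma> = 1"
proof -
  have "\<sigma> \<in> Alt n \<and> \<psi> \<sigma> = 1"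
    using Alt_permutes[OF \<sigma>] finite_lessThan Alt_evenperm[OF \<sigma>]
  proof (induction rule: evenperm_3cycle_induct)
    case (cycle \<tau> a b c)
    let ?t = "transpose a b \<circ> transpose b c"
    have t: "?t \<in> Alt n" using cycle by (simp add: transpose_comp_transpose_in_Alt)
    then have "\<psi> (\<tau> \<circ> ?t) = 1" using cycle alt_character_comp[OF \<psi>] cycles by simp
    then show ?case using cycle Alt_comp[OF _ t] by blast
  qed (use alt_character_id[OF \<psi>] Alt_id in blast)
  then show ?thesis ..
qed

lemma alt_character_3cycle_cube:
  assumes \<psi>: "alt_character n \<psi>" and "a < n" "b < n" "c < n" "a \<noteq> b" "b \<noteq> c"
  shows "\<psi> (transpose a b \<circ> transpose b c) ^ 3 = 1"
  using alt_character_funpow[OF \<psi>, of "transpose a b \<circ> transpose b c" 3] assms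
  by (simp add: three_cycle_cube transpose_comp_transpose_in_Alt alt_character_id)

lemma alt_character_cube:
  assumes \<psi>: "alt_character n \<psi>" and \<sigma>: "\<sigma> \<in> Alt n"
  shows "\<psi> \<sigma> ^ 3 = 1"
  using alt_character_trivial_if_3cycles[OF alt_character_power[OF \<psi>] \<sigma>]
    alt_character_3cycle_cube[OF \<psi>] by blast

lemma alt_character_3cycle_ge5:
  assumes \<psi>: "alt_character n \<psi>" and n: "5 \<le> n"
    and abc: "a < n" "b < n" "c < n" "a \<noteq> b" "b \<noteq> c" "a \<noteq> c"
  shows "\<psi> (transpose a b \<circ> transpose b c) = 1"
proof -
  let ?t = "transpose a b \<circ> transpose b c" and ?t' = "transpose b c \<circ> transpose a b"
  have "card ({..<n} - {a, b, c}) = n - 3"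
    using abc by (subst card_Diff_subset) auto
  then have "2 \<le> card ({..<n} - {a, b, c})" using n by simp
  then obtain d e where de: "d \<in> {..<n} - {a, b, c}" "e \<in> {..<n} - {a, b, c}" "d \<noteq> e"
    by (metis One_nat_def card_le_Suc0_iff_eq finite_Diff finite_lessThan not_less_eq_eq numeral_2_eq_2)
  \<comment> \<open>the involution \<open>?g\<close> of \<open>Alt n\<close> conjugates \<open>?t\<close> to its inverse; this is where \<open>n \<ge> 5\<close> is needed\<close>
  let ?g = "transpose a b \<circ> transpose d e"
  have in_Alt: "?g \<in> Alt n" "?t \<in> Alt n" "?t' \<in> Alt n"
    using abc de by (auto intro: transpose_comp_transpose_in_Alt)
  have "?g \<circ> ?g = id" "?g \<circ> ?t \<circ> ?g = ?t'" "?t \<circ> ?t' = id"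
    using abc de by (auto intro!: ext simp: transpose_def)
  then have "\<psi> ?g * \<psi> ?g = 1" "\<psi> ?g * \<psi> ?t * \<psi> ?g = \<psi> ?t'" "\<psi> ?t * \<psi> ?t' = 1"
    using in_Alt alt_character_comp[OF \<psi>] alt_character_id[OF \<psi>] Alt_comp by metis+
  then have "\<psi> ?t ^ 2 = 1"
    by (simp add: power2_eq_square algebra_simps)
  moreover have "\<psi> ?t ^ 3 = 1" using alt_character_3cycle_cube[OF \<psi> abc(1-5)] .
  ultimately show ?thesis using power_eq_one_if_coprime_exponents[of "\<psi> ?t" 3 2] by simp
qed

lemma alt_character_trivial_ge5:
  "alt_character n \<psi> \<Longrightarrow> 5 \<le> n \<Longrightarrow> \<sigma> \<in> Alt n \<Longrightarrow> \<psi> \<sigma> = 1"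
  using alt_character_trivial_if_3cycles alt_character_3cycle_ge5 by blast

section \<open>Diagonal matrices of prime power order\<close>

lemma power_prime_power_eq_one_mono:
  fixes z :: "'a :: monoid_mult"
  assumes "z ^ (q ^ k) = 1" "k \<le> K"
  shows "z ^ (q ^ K) = 1"
proof -
  have "q ^ K = q ^ k * q ^ (K - k)" using assms(2) by (simp flip: power_add)
  then show ?thesis using assms(1) by (simp add: power_mult)
qed

lemma common_prime_power_exponent:
  fixes z :: "nat \<Rightarrow> 'a :: monoid_mult"
  assumes "\<And>i. i < n \<Longrightarrow> \<exists>k. z i ^ (q ^ k) = 1"
  shows "\<exists>K. \<forall>i<n. z i ^ (q ^ K) = 1"
  using assms
proof (induction n)
  case (Suc n)
  then obtain K k where "\<forall>i<n. z i ^ (q ^ K) = 1" "z n ^ (q ^ k) = 1" by (meson lessI less_SucI)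
  then have "z i ^ (q ^ (K + k)) = 1" if "i < Suc n" for i
    using that power_prime_power_eq_one_mono[of "z i" q K "K + k"]
      power_prime_power_eq_one_mono[of "z n" q k "K + k"]
    by (auto simp: less_Suc_eq)
  then show ?case by blast
qed simp

lemma mem_Dq_iff:
  "d \<in> Dq p q \<longleftrightarrow> (\<forall>i. p \<le> i \<longrightarrow> d i = 1) \<and> (\<forall>i<p. d i \<noteq> 0 \<and> (\<exists>k. d i ^ (q ^ k) = 1))"
proof
  assume "d \<in> Dq p q"
  then show "(\<forall>i. p \<le> i \<longrightarrow> d i = 1) \<and> (\<forall>i<p. d i \<noteq> 0 \<and> (\<exists>k. d i ^ (q ^ k) = 1))"
    by (auto simp: Dq_def)
next
  assume "(\<forall>i. p \<le> i \<longrightarrow> d i = 1) \<and> (\<forall>i<p. d i \<noteq> 0 \<and> (\<exists>k. d i ^ (q ^ k) = 1))"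
  then show "d \<in> Dq p q"
    using common_prime_power_exponent[of p d q] by (simp add: Dq_def)
qed

lemma Dq_outside: "d \<in> Dq p q \<Longrightarrow> p \<le> i \<Longrightarrow> d i = 1"
  by (simp add: Dq_def)

lemma Dq_nonzero: "d \<in> Dq p q \<Longrightarrow> d i \<noteq> 0"
  by (cases "p \<le> i") (simp_all add: Dq_def)

lemma Dq_prime_power_order: "d \<in> Dq p q \<Longrightarrow> i < p \<Longrightarrow> \<exists>k. d i ^ (q ^ k) = 1"
  by (simp add: mem_Dq_iff)

lemma Dq_mult:
  assumes "d \<in> Dq p q" "e \<in> Dq p q"
  shows "(\<lambda>i. d i * e i) \<in> Dq p q"
proof -
  have "\<exists>K. (d i * e i) ^ (q ^ K) = 1" if "i < p" for i
  proof -
    obtain k l where "d i ^ (q ^ k) = 1" "e i ^ (q ^ l) = 1"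
      using assms \<open>i < p\<close> Dq_prime_power_order by meson
    then have "(d i * e i) ^ (q ^ (k + l)) = 1"
      using power_prime_power_eq_one_mono[of "d i" q k "k + l"]
        power_prime_power_eq_one_mono[of "e i" q l "k + l"]
      by (simp add: power_mult_distrib)
    then show ?thesis ..
  qed
  moreover have "d i * e i \<noteq> 0" for i using assms Dq_nonzero by simp
  moreover have "d i * e i = 1" if "p \<le> i" for i using Dq_outside[OF assms(1) that] Dq_outside[OF assms(2) that] by simp
  ultimately show ?thesis unfolding mem_Dq_iff by blast
qed

lemma Dq_inverse: "d \<in> Dq p q \<Longrightarrow> (\<lambda>i. 1 / d i) \<in> Dq p q"
  unfolding mem_Dq_iff by (auto simp: power_one_over)

lemma Dq_act:
  assumes "\<sigma> \<in> Alt p" "d \<in> Dq p q"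
  shows "act \<sigma> d \<in> Dq p q"
proof -
  have "inv' \<sigma> \<in> Alt p" using assms(1) by (rule Alt_inv)
  then show ?thesis
    using assms(2) Alt_apply_less Alt_apply_outside unfolding mem_Dq_iff act_def by (metis not_le)
qed

lemma prod_act: "\<sigma> \<in> Alt p \<Longrightarrow> (\<Prod>i<p. act \<sigma> d i) = (\<Prod>i<p. d i)"
  using prod.permute[OF permutes_inv[OF Alt_permutes], of \<sigma> p d] by (simp add: act_def o_def)

lemma Xq_Dq: "d \<in> Xq p q \<Longrightarrow> d \<in> Dq p q"
  by (simp add: Xq_def)

lemma Xq_one: "(\<lambda>i. 1) \<in> Xq p q"
  by (simp add: Xq_def mem_Dq_iff)

lemma Xq_mult: "d \<in> Xq p q \<Longrightarrow> e \<in> Xq p q \<Longrightarrow> (\<lambda>i. d i * e i) \<in> Xq p q"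
  by (simp add: Xq_def Dq_mult prod.distrib)

lemma Xq_inverse: "d \<in> Xq p q \<Longrightarrow> (\<lambda>i. 1 / d i) \<in> Xq p q"
  by (simp add: Xq_def Dq_inverse prod_dividef)

lemma Xq_act: "\<sigma> \<in> Alt p \<Longrightarrow> d \<in> Xq p q \<Longrightarrow> act \<sigma> d \<in> Xq p q"
  by (simp add: Xq_def Dq_act prod_act)

abbreviation coboundary :: "(nat \<Rightarrow> complex) \<Rightarrow> (nat \<Rightarrow> nat) \<Rightarrow> nat \<Rightarrow> complex" where
  "coboundary m \<sigma> \<equiv> \<lambda>i. act \<sigma> m i / m i"

lemma coboundary_Dq: "\<sigma> \<in> Alt p \<Longrightarrow> m \<in> Dq p q \<Longrightarrow> coboundary m \<sigma> \<in> Dq p q"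
  using Dq_mult[OF Dq_act Dq_inverse] by simp

lemma coboundary_Xq: "\<sigma> \<in> Alt p \<Longrightarrow> m \<in> Xq p q \<Longrightarrow> coboundary m \<sigma> \<in> Xq p q"
  using Xq_mult[OF Xq_act Xq_inverse] by simp

lemma Dq_coboundary_eq_Xq_coboundary:
  assumes pq: "coprime p q" and p: "0 < p" and m: "m \<in> Dq p q"
  shows "\<exists>m'\<in>Xq p q. \<forall>\<sigma>\<in>Alt p. coboundary m' \<sigma> = coboundary m \<sigma>"
proof -
  obtain k where k: "\<forall>i<p. m i ^ (q ^ k) = 1" using m by (auto simp: Dq_def)
  define P where "P = (\<Prod>i<p. m i)"
  have P: "P \<noteq> 0" "(1 / P) ^ (q ^ k) = 1"
    using k Dq_nonzero[OF m] by (simp_all add: P_def prod_power_distrib power_one_over)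
  \<comment> \<open>rescale \<open>m\<close> by a \<open>p\<close>-th root of \<open>1 / det m\<close> that has \<open>q\<close>-power order\<close>
  obtain u v where "p * u = q ^ k * v + gcd p (q ^ k)" using bezout_nat[of p "q ^ k"] p by auto
  then have uv: "p * u = q ^ k * v + 1" using pq by simp
  define l where "l = (1 / P) ^ u"
  have "l ^ p = ((1 / P) ^ (q ^ k)) ^ v * (1 / P)"
    unfolding l_def by (simp flip: power_mult add: mult.commute uv power_add)
  then have l_p: "l ^ p = 1 / P" using P by simp
  have "l ^ (q ^ k) = ((1 / P) ^ (q ^ k)) ^ u"
    unfolding l_def by (simp only: power_mult[symmetric] mult.commute)
  then have l_q: "l ^ (q ^ k) = 1" using P by simp
  define m' where "m' i = (if i < p then l * m i else 1)" for i
  have l0: "l \<noteq> 0" using l_p P p by (auto simp: power_0_left)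
  then have "m' \<in> Dq p q"
    unfolding Dq_def using l_q k Dq_nonzero[OF m]
    by (intro CollectI conjI exI[of _ k]) (auto simp: m'_def power_mult_distrib)
  moreover have "(\<Prod>i<p. m' i) = 1"
    using l_p P by (simp add: m'_def prod.distrib P_def[symmetric])
  moreover have "coboundary m' \<sigma> = coboundary m \<sigma>" if \<sigma>: "\<sigma> \<in> Alt p" for \<sigma>
    using Alt_apply_less[OF Alt_inv[OF \<sigma>]] Alt_apply_outside[OF Alt_inv[OF \<sigma>]]
      Dq_outside[OF m] l0 by (auto simp: fun_eq_iff act_def m'_def)
  ultimately show ?thesis by (auto simp: Xq_def)
qed

section \<open>Cocycles and Shapiro's lemma\<close>

lemma Z1_mem: "f \<in> Z1 M p \<Longrightarrow> \<sigma> \<in> Alt p \<Longrightarrow> f \<sigma> \<in> M"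
  by (simp add: Z1_def)

lemma Z1_outside: "f \<in> Z1 M p \<Longrightarrow> \<sigma> \<notin> Alt p \<Longrightarrow> f \<sigma> = (\<lambda>i. 1)"
  by (simp add: Z1_def)

lemma Z1_comp:
  "f \<in> Z1 M p \<Longrightarrow> \<sigma> \<in> Alt p \<Longrightarrow> \<tau> \<in> Alt p \<Longrightarrow> f (\<sigma> \<circ> \<tau>) i = f \<sigma> i * f \<tau> (inv' \<sigma> i)"
  by (simp add: Z1_def act_def)

lemma Z1_nonzero: "f \<in> Z1 M p \<Longrightarrow> M \<subseteq> Dq p q \<Longrightarrow> f \<sigma> i \<noteq> 0"
  by (cases "\<sigma> \<in> Alt p") (auto simp: Z1_outside dest: Z1_mem Dq_nonzero)

lemma Z1_id: "f \<in> Z1 M p \<Longrightarrow> M \<subseteq> Dq p q \<Longrightarrow> f id i = 1"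
  using Z1_comp[of f M p id id i] Z1_nonzero[of f M p q id i] by simp

lemma Z1_mono: "M \<subseteq> N \<Longrightarrow> Z1 M p \<subseteq> Z1 N p"
  unfolding Z1_def by blast

lemma B1I: "f \<in> Z1 M p \<Longrightarrow> m \<in> M \<Longrightarrow> \<forall>\<sigma>\<in>Alt p. f \<sigma> = coboundary m \<sigma> \<Longrightarrow> f \<in> B1 M p"
  unfolding B1_def using Z1_outside by (intro CollectI bexI[of _ m]) auto

lemma B1_subset_Z1:
  assumes M: "M \<subseteq> Dq p q" and closed: "\<And>m \<sigma>. m \<in> M \<Longrightarrow> \<sigma> \<in> Alt p \<Longrightarrow> coboundary m \<sigma> \<in> M"
  shows "B1 M p \<subseteq> Z1 M p"
proof
  fix f assume "f \<in> B1 M p"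
  then obtain m where m: "m \<in> M" and f: "\<And>\<sigma>. f \<sigma> = (if \<sigma> \<in> Alt p then coboundary m \<sigma> else (\<lambda>i. 1))"
    unfolding B1_def by blast
  have "f (\<sigma> \<circ> \<tau>) = (\<lambda>i. f \<sigma> i * act \<sigma> (f \<tau>) i)" if "\<sigma> \<in> Alt p" "\<tau> \<in> Alt p" for \<sigma> \<tau>
    using that Alt_comp f Dq_nonzero[of m p q] m M
    by (auto simp: act_def Alt_inv_distrib)
  then show "f \<in> Z1 M p" unfolding Z1_def using f closed m by auto
qed

definition coset_rep :: "nat \<Rightarrow> nat \<Rightarrow> nat \<Rightarrow> nat" where
  "coset_rep n i = (if i = n then id else SOME g. g \<in> Alt (Suc n) \<and> g n = i)"

lemma coset_rep:
  assumes "3 \<le> n" "i < Suc n"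
  shows "coset_rep n i \<in> Alt (Suc n)" "coset_rep n i n = i"
  using someI_ex[OF Alt_Suc_transitive[OF assms, unfolded Bex_def]]
  by (auto simp: coset_rep_def)

definition stab_part :: "nat \<Rightarrow> (nat \<Rightarrow> nat) \<Rightarrow> nat \<Rightarrow> nat \<Rightarrow> nat" where
  "stab_part n \<sigma> i = inv' (coset_rep n i) \<circ> \<sigma> \<circ> coset_rep n (inv' \<sigma> i)"

lemma coset_rep_comp_stab_part:
  assumes "3 \<le> n" "i < Suc n"
  shows "coset_rep n i \<circ> stab_part n \<sigma> i = \<sigma> \<circ> coset_rep n (inv' \<sigma> i)"
  using Alt_o_inv[OF coset_rep(1)[OF assms]] by (simp add: stab_part_def o_assoc)

lemma coset_rep_inv: "3 \<le> n \<Longrightarrow> i < Suc n \<Longrightarrow> inv' (coset_rep n i) i = n"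
  using Alt_inverses(2)[OF coset_rep(1), of n i n] coset_rep(2)[of n i] by simp

lemma stab_part_Alt:
  assumes n: "3 \<le> n" and \<sigma>: "\<sigma> \<in> Alt (Suc n)" and i: "i < Suc n"
  shows "stab_part n \<sigma> i \<in> Alt n"
proof -
  have j: "inv' \<sigma> i < Suc n" using Alt_apply_less[OF Alt_inv[OF \<sigma>] i] .
  have in_Alt_Suc: "stab_part n \<sigma> i \<in> Alt (Suc n)"
    unfolding stab_part_def using \<sigma> coset_rep(1)[OF n] i j by (intro Alt_comp Alt_inv)
  have "stab_part n \<sigma> i n = n"
    using coset_rep(2)[OF n j] Alt_inverses(1)[OF \<sigma>] coset_rep_inv[OF n i]
    by (simp add: stab_part_def)
  with in_Alt_Suc show ?thesis by (rule Alt_Suc_fixing_last)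
qed

lemma stab_part_comp:
  assumes n: "3 \<le> n" and \<sigma>: "\<sigma> \<in> Alt (Suc n)" and \<tau>: "\<tau> \<in> Alt (Suc n)" and i: "i < Suc n"
  shows "stab_part n (\<sigma> \<circ> \<tau>) i = stab_part n \<sigma> i \<circ> stab_part n \<tau> (inv' \<sigma> i)"
proof -
  have j: "inv' \<sigma> i < Suc n" using Alt_apply_less[OF Alt_inv[OF \<sigma>] i] .
  have "coset_rep n (inv' \<sigma> i) \<circ> inv' (coset_rep n (inv' \<sigma> i)) = id"
    using Alt_o_inv[OF coset_rep(1)[OF n j]] .
  then show ?thesis
    by (simp add: stab_part_def Alt_inv_distrib[OF \<sigma> \<tau>] o_assoc) (metis comp_assoc comp_id)
qed

lemma stab_part_last: "3 \<le> n \<Longrightarrow> h \<in> Alt n \<Longrightarrow> stab_part n h n = h"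
  using Alt_inv[of h n] Alt_apply_outside[of "inv' h" n n] by (simp add: stab_part_def coset_rep_def)

lemma stab_part_id: "3 \<le> n \<Longrightarrow> i < Suc n \<Longrightarrow> stab_part n id i = id"
  using Alt_inv_o[OF coset_rep(1), of n i] by (simp add: stab_part_def)

lemma alt_character_restrict:
  assumes f: "f \<in> Z1 M (Suc n)" and M: "M \<subseteq> Dq (Suc n) q"
  shows "alt_character n (\<lambda>h. f h n)"
proof (rule alt_characterI)
  show "f id n = 1" using Z1_id[OF f M] .
  fix \<sigma> \<tau> assume "\<sigma> \<in> Alt n" "\<tau> \<in> Alt n"
  moreover have "inv' \<sigma> n = n" using Alt_inv[OF \<open>\<sigma> \<in> Alt n\<close>] by (simp add: Alt_apply_outside)
  ultimately show "f (\<sigma> \<circ> \<tau>) n = f \<sigma> n * f \<tau> n"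
    using Z1_comp[OF f] Alt_mono[of n "Suc n"] by simp
qed

lemma Z1_coboundary_if_restriction_trivial:
  assumes f: "f \<in> Z1 (Dq (Suc n) q) (Suc n)" and n: "3 \<le> n"
    and trivial: "\<And>h. h \<in> Alt n \<Longrightarrow> f h n = 1"
  shows "\<exists>m\<in>Dq (Suc n) q. \<forall>\<sigma>\<in>Alt (Suc n). f \<sigma> = coboundary m \<sigma>"
proof -
  define m where "m i = (if i < Suc n then 1 / f (coset_rep n i) i else 1)" for i
  have fD: "f \<sigma> \<in> Dq (Suc n) q" if "\<sigma> \<in> Alt (Suc n)" for \<sigma> using Z1_mem[OF f that] .
  have "f \<sigma> i = coboundary m \<sigma> i" if \<sigma>: "\<sigma> \<in> Alt (Suc n)" for \<sigma> i
  proof (cases "i < Suc n")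
    case False
    then show ?thesis using Alt_apply_outside[OF Alt_inv[OF \<sigma>]] Dq_outside[OF fD[OF \<sigma>]]
      by (simp add: act_def m_def)
  next
    case True
    define j where "j = inv' \<sigma> i"
    have j: "j < Suc n" unfolding j_def using Alt_apply_less[OF Alt_inv[OF \<sigma>] True] .
    have gi: "coset_rep n i \<in> Alt (Suc n)" and gj: "coset_rep n j \<in> Alt (Suc n)"
      using coset_rep(1) n True j by auto
    have h: "stab_part n \<sigma> i \<in> Alt (Suc n)" "f (stab_part n \<sigma> i) n = 1"
      using stab_part_Alt[OF n \<sigma> True] Alt_mono[of n "Suc n"] trivial by auto
    have "f (coset_rep n i) i = f (coset_rep n i \<circ> stab_part n \<sigma> i) i"
      using Z1_comp[OF f gi h(1)] coset_rep_inv[OF n True] h(2) by simp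
    also have "\<dots> = f \<sigma> i * f (coset_rep n j) j"
      using Z1_comp[OF f \<sigma> gj] coset_rep_comp_stab_part[OF n True] by (simp add: j_def)
    finally show ?thesis
      using Z1_nonzero[OF f, of q] True j by (simp add: act_def m_def j_def field_simps)
  qed
  moreover have "m \<in> Dq (Suc n) q"
    using Dq_inverse[OF fD[OF coset_rep(1)[OF n]]]
    by (simp add: mem_Dq_iff m_def)
  ultimately show ?thesis by blast
qed

definition induced :: "nat \<Rightarrow> ((nat \<Rightarrow> nat) \<Rightarrow> complex) \<Rightarrow> (nat \<Rightarrow> nat) \<Rightarrow> nat \<Rightarrow> complex" where
  "induced n \<psi> \<sigma> i = (if \<sigma> \<in> Alt (Suc n) \<and> i < Suc n then \<psi> (stab_part n \<sigma> i) else 1)"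

lemma induced_comp:
  assumes \<psi>: "alt_character n \<psi>" and n: "3 \<le> n" and \<sigma>: "\<sigma> \<in> Alt (Suc n)" and \<tau>: "\<tau> \<in> Alt (Suc n)"
  shows "induced n \<psi> (\<sigma> \<circ> \<tau>) i = induced n \<psi> \<sigma> i * induced n \<psi> \<tau> (inv' \<sigma> i)"
proof (cases "i < Suc n")
  case True
  have "inv' \<sigma> i < Suc n" using Alt_apply_less[OF Alt_inv[OF \<sigma>] True] .
  then show ?thesis
    using True \<sigma> \<tau> Alt_comp[OF \<sigma> \<tau>] stab_part_comp[OF n \<sigma> \<tau> True]
      alt_character_comp[OF \<psi> stab_part_Alt[OF n \<sigma> True] stab_part_Alt[OF n \<tau>]]
    by (simp add: induced_def)
next
  case False
  then show ?thesis using Alt_apply_outside[OF Alt_inv[OF \<sigma>]] by (simp add: induced_def)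
qed

lemma induced_id: "alt_character n \<psi> \<Longrightarrow> 3 \<le> n \<Longrightarrow> induced n \<psi> id i = 1"
  by (simp add: induced_def stab_part_id alt_character_id)

lemma induced_last: "3 \<le> n \<Longrightarrow> h \<in> Alt n \<Longrightarrow> induced n \<psi> h n = \<psi> h"
  using Alt_mono[of n "Suc n" h] by (simp add: induced_def stab_part_last)

lemma alt_character_cocycle_det:
  assumes one: "\<And>i. f id i = 1"
    and comp: "\<And>\<sigma> \<tau> i. \<sigma> \<in> Alt p \<Longrightarrow> \<tau> \<in> Alt p \<Longrightarrow> f (\<sigma> \<circ> \<tau>) i = f \<sigma> i * f \<tau> (inv' \<sigma> i)"
  shows "alt_character p (\<lambda>\<sigma>. \<Prod>i<p. f \<sigma> i)"
proof (rule alt_characterI)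
  fix \<sigma> \<tau> assume \<sigma>: "\<sigma> \<in> Alt p" and \<tau>: "\<tau> \<in> Alt p"
  have "(\<Prod>i<p. f (\<sigma> \<circ> \<tau>) i) = (\<Prod>i<p. f \<sigma> i) * (\<Prod>i<p. act \<sigma> (f \<tau>) i)"
    using comp[OF \<sigma> \<tau>] by (simp add: prod.distrib act_def)
  then show "(\<Prod>i<p. f (\<sigma> \<circ> \<tau>) i) = (\<Prod>i<p. f \<sigma> i) * (\<Prod>i<p. f \<tau> i)"
    using prod_act[OF \<sigma>] by simp
qed (simp add: one)

lemma induced_Z1_Xq:
  assumes \<psi>: "alt_character n \<psi>" and n: "4 \<le> n" and order: "\<And>h. h \<in> Alt n \<Longrightarrow> \<psi> h ^ (q ^ k) = 1"
  shows "induced n \<psi> \<in> Z1 (Xq (Suc n) q) (Suc n)"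
proof -
  have comp: "induced n \<psi> (\<sigma> \<circ> \<tau>) i = induced n \<psi> \<sigma> i * induced n \<psi> \<tau> (inv' \<sigma> i)"
    if "\<sigma> \<in> Alt (Suc n)" "\<tau> \<in> Alt (Suc n)" for \<sigma> \<tau> i
    using induced_comp[OF \<psi> _ that] n by simp
  have det: "alt_character (Suc n) (\<lambda>\<sigma>. \<Prod>i<Suc n. induced n \<psi> \<sigma> i)"
    using induced_id[OF \<psi>] n comp by (intro alt_character_cocycle_det) auto
  have "induced n \<psi> \<sigma> \<in> Xq (Suc n) q" if \<sigma>: "\<sigma> \<in> Alt (Suc n)" for \<sigma>
  proof -
    have "induced n \<psi> \<sigma> i \<noteq> 0 \<and> (\<exists>k. induced n \<psi> \<sigma> i ^ (q ^ k) = 1)" if "i < Suc n" for i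
    proof -
      have "stab_part n \<sigma> i \<in> Alt n" using stab_part_Alt[OF _ \<sigma> that] n by simp
      then have "\<psi> (stab_part n \<sigma> i) ^ 3 = 1" "\<psi> (stab_part n \<sigma> i) ^ (q ^ k) = 1"
        using alt_character_cube[OF \<psi>] order by blast+
      then show ?thesis using \<sigma> that by (auto simp: induced_def)
    qed
    then have "induced n \<psi> \<sigma> \<in> Dq (Suc n) q"
      unfolding mem_Dq_iff by (simp add: induced_def)
    moreover have "(\<Prod>i<Suc n. induced n \<psi> \<sigma> i) = 1"
      using alt_character_trivial_ge5[OF det _ \<sigma>] n by simp
    ultimately show ?thesis by (simp add: Xq_def)
  qed
  then show ?thesis
    unfolding Z1_def using comp by (auto simp: induced_def act_def fun_eq_iff)
qed

lemma Z1_Xq_mult: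
  assumes f: "f \<in> Z1 (Xq p q) p" and g: "g \<in> Z1 (Xq p q) p"
  shows "(\<lambda>\<sigma> i. f \<sigma> i * g \<sigma> i) \<in> Z1 (Xq p q) p"
  using Xq_mult[OF Z1_mem[OF f] Z1_mem[OF g]] Z1_outside[OF f] Z1_outside[OF g]
    Z1_comp[OF f] Z1_comp[OF g]
  unfolding Z1_def by (auto simp: act_def fun_eq_iff)

lemma Z1_Xq_inverse:
  assumes f: "f \<in> Z1 (Xq p q) p"
  shows "(\<lambda>\<sigma> i. 1 / f \<sigma> i) \<in> Z1 (Xq p q) p"
  using Xq_inverse[OF Z1_mem[OF f]] Z1_outside[OF f] Z1_comp[OF f]
  unfolding Z1_def by (auto simp: act_def fun_eq_iff)

lemma Z1_Xq_one: "(\<lambda>\<sigma> i. 1) \<in> Z1 (Xq p q) p"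
  unfolding Z1_def act_def using Xq_one by auto

lemma group_Z1_group_Xq: "group (Z1_group (Xq p q) p)"
proof (rule groupI)
  fix f assume "f \<in> carrier (Z1_group (Xq p q) p)"
  then have f: "f \<in> Z1 (Xq p q) p" by (simp add: Z1_group_def)
  have "f \<sigma> i \<noteq> 0" for \<sigma> i using Z1_nonzero[OF f] Xq_Dq by blast
  then show "\<exists>g\<in>carrier (Z1_group (Xq p q) p). g \<otimes>\<^bsub>Z1_group (Xq p q) p\<^esub> f = \<one>\<^bsub>Z1_group (Xq p q) p\<^esub>"
    using Z1_Xq_inverse[OF f] by (intro bexI[of _ "\<lambda>\<sigma> i. 1 / f \<sigma> i"]) (simp_all add: Z1_group_def)
qed (simp_all add: Z1_group_def Z1_Xq_mult Z1_Xq_one mult.assoc)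

theorem Z1_Dq_eq_B1:
  assumes p: "5 \<le> p" and q: "p = 5 \<Longrightarrow> \<not> 3 dvd q"
  shows "Z1 (Dq p q) p = B1 (Dq p q) p"
proof
  show "B1 (Dq p q) p \<subseteq> Z1 (Dq p q) p"
    by (rule B1_subset_Z1) (auto intro: coboundary_Dq)
  show "Z1 (Dq p q) p \<subseteq> B1 (Dq p q) p"
  proof
    fix f assume f: "f \<in> Z1 (Dq p q) p"
    obtain n where n: "p = Suc n" using p by (cases p) auto
    have \<psi>: "alt_character n (\<lambda>h. f h n)" using alt_character_restrict f n by blast
    have "f h n = 1" if h: "h \<in> Alt n" for h
    proof (cases "5 \<le> n")
      case True
      then show ?thesis using alt_character_trivial_ge5[OF \<psi> _ h] by simp
    next
      case False
      then have "coprime 3 q" using q n p by (simp add: prime_imp_coprime)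
      obtain k where "f h n ^ (q ^ k) = 1"
        using Dq_prime_power_order[OF Z1_mem[OF f Alt_mono[OF _ h]]] n by auto
      moreover have "f h n ^ 3 = 1" using alt_character_cube[OF \<psi> h] .
      ultimately show ?thesis
        using power_eq_one_if_coprime_exponents \<open>coprime 3 q\<close> by (metis coprime_power_right_iff zero_less_numeral)
    qed
    then show "f \<in> B1 (Dq p q) p"
      using Z1_coboundary_if_restriction_trivial[of f n q] f n p B1I[OF f] by auto
  qed
qed

section \<open>The character of \<open>Alt 4\<close> with kernel the Klein four-group\<close>

lemma less_4_cases: "(x::nat) < 4 \<longleftrightarrow> x = 0 \<or> x = 1 \<or> x = 2 \<or> x = 3"
  by auto

text \<open>Read \<open>{0,1,2,3}\<close> as the field \<open>F\<^sub>4\<close>, with \<open>xor\<close> as addition and \<open>2\<close> as a generator of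
  the multiplicative group (in \<open>F\<^sub>4\<close>, \<open>2 \<cdot> 2 = 3\<close> and \<open>2 \<cdot> 3 = 1\<close>), so that \<open>dlog4 x y\<close> is the discrete logarithm
  of \<open>x - y\<close> for \<open>x \<noteq> y\<close>. The symmetric group on \<open>F\<^sub>4\<close> is \<open>A\<Gamma>L(1,4)\<close>: even permutations are
  the affine maps \<open>x \<mapsto> a x + b\<close> and transpositions are maps \<open>x \<mapsto> a x\<^sup>2 + b\<close>. On differences
  this is \<open>semilinear4 1\<close> resp. \<open>semilinear4 2\<close>, and \<open>dlog4 (\<sigma> 0) (\<sigma> 1)\<close> is the logarithm of \<open>a\<close>.\<close>

definition dlog4 :: "nat \<Rightarrow> nat \<Rightarrow> nat" where
  "dlog4 x y = xor x y - 1"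

definition semilinear4 :: "nat \<Rightarrow> (nat \<Rightarrow> nat) \<Rightarrow> bool" where
  "semilinear4 e \<sigma> \<longleftrightarrow>
     (\<forall>x<4. \<forall>y<4. x \<noteq> y \<longrightarrow> [dlog4 (\<sigma> x) (\<sigma> y) = dlog4 (\<sigma> 0) (\<sigma> 1) + e * dlog4 x y] (mod 3))"

lemma semilinear4_transpose:
  assumes "a < 4" "b < 4" "a \<noteq> b"
  shows "semilinear4 2 (transpose a b)"
  unfolding semilinear4_def less_4_cases
  using assms unfolding less_4_cases
  by (elim disjE) (auto simp: dlog4_def cong_def)

lemma semilinear4_comp:
  assumes \<sigma>: "\<sigma> permutes {..<4}" "semilinear4 e \<sigma>" and \<tau>: "\<tau> permutes {..<4}" "semilinear4 e' \<tau>"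
  shows "semilinear4 (e * e') (\<sigma> \<circ> \<tau>)"
  unfolding semilinear4_def
proof (intro allI impI)
  fix x y :: nat assume xy: "x < 4" "y < 4" "x \<noteq> y"
  let ?D = "\<lambda>\<sigma>. dlog4 (\<sigma> 0) (\<sigma> 1)"
  have \<tau>_lt: "\<tau> z < 4" if "z < 4" for z using permutes_in_image[OF \<tau>(1)] that by simp
  have \<tau>_ne: "\<tau> z \<noteq> \<tau> w" if "z \<noteq> w" for z w using permutes_inj[OF \<tau>(1)] that by (meson injD)
  have "[dlog4 (\<sigma> (\<tau> x)) (\<sigma> (\<tau> y)) = ?D \<sigma> + e * dlog4 (\<tau> x) (\<tau> y)] (mod 3)"
    using \<sigma>(2) \<tau>_lt \<tau>_ne xy unfolding semilinear4_def by blast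
  also have "[?D \<sigma> + e * dlog4 (\<tau> x) (\<tau> y) = ?D \<sigma> + e * (?D \<tau> + e' * dlog4 x y)] (mod 3)"
    using \<tau>(2) xy unfolding semilinear4_def by (simp add: cong_add cong_scalar_left)
  also have "?D \<sigma> + e * (?D \<tau> + e' * dlog4 x y) = (?D \<sigma> + e * ?D \<tau>) + e * e' * dlog4 x y"
    by (simp add: algebra_simps)
  also have "[(?D \<sigma> + e * ?D \<tau>) + e * e' * dlog4 x y = ?D (\<sigma> \<circ> \<tau>) + e * e' * dlog4 x y] (mod 3)"
    using \<sigma>(2) \<tau>_lt \<tau>_ne unfolding semilinear4_def by (simp add: cong_add cong_sym)
  finally show "[dlog4 ((\<sigma> \<circ> \<tau>) x) ((\<sigma> \<circ> \<tau>) y) = ?D (\<sigma> \<circ> \<tau>) + e * e' * dlog4 x y] (mod 3)"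
    by simp
qed

lemma semilinear4_cong:
  assumes "[e = e'] (mod 3)"
  shows "semilinear4 e \<sigma> \<longleftrightarrow> semilinear4 e' \<sigma>"
proof -
  have "[D + e * d = D + e' * d] (mod 3)" for D d
    using assms by (intro cong_add cong_refl cong_mult)
  then show ?thesis unfolding semilinear4_def cong_def by simp
qed

lemma permutes4_semilinear4:
  assumes "\<sigma> permutes {..<4}"
  shows "semilinear4 (if evenperm \<sigma> then 1 else 2) \<sigma>"
  using assms finite_lessThan
proof (induction rule: permutes_induct)
  case id
  then show ?case by (simp add: semilinear4_def dlog4_def)
next
  case (swap a b \<rho>)
  have parity: "evenperm (transpose a b \<circ> \<rho>) \<longleftrightarrow> \<not> evenperm \<rho>"
    using \<open>a \<noteq> b\<close> permutes_imp_permutation[OF finite_lessThan \<open>\<rho> permutes {..<4}\<close>]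
    by (simp add: evenperm_comp evenperm_swap permutation_swap_id)
  have "semilinear4 (2 * (if evenperm \<rho> then 1 else 2)) (transpose a b \<circ> \<rho>)"
    using swap semilinear4_transpose by (intro semilinear4_comp) (auto intro: permutes_swap_id)
  moreover have "[2 * (if evenperm \<rho> then 1 else 2) = (if evenperm (transpose a b \<circ> \<rho>) then 1 else 2::nat)] (mod 3)"
    unfolding parity by (simp add: cong_def)
  ultimately show ?case by (metis semilinear4_cong)
qed

lemma Alt4_semilinear4: "\<sigma> \<in> Alt 4 \<Longrightarrow> semilinear4 1 \<sigma>"
  using permutes4_semilinear4[OF Alt_permutes] Alt_evenperm by fastforce

lemma xor_less_4: "x < 4 \<Longrightarrow> y < (4::nat) \<Longrightarrow> x \<noteq> y \<Longrightarrow> 0 < xor x y \<and> xor x y < 4"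
  unfolding less_4_cases by (elim disjE) simp_all

lemma dlog4_less_3: "x < 4 \<Longrightarrow> y < 4 \<Longrightarrow> x \<noteq> y \<Longrightarrow> dlog4 x y < 3"
  using xor_less_4 by (simp add: dlog4_def less_diff_conv2 Suc_leI)

lemma xor_cancel_right: "xor (xor x y) y = (x::nat)"
  by (simp add: xor.assoc)

definition \<omega> :: complex where
  "\<omega> = Complex (-1/2) (sqrt 3 / 2)"

lemma omega_square: "\<omega> ^ 2 = Complex (-1/2) (- sqrt 3 / 2)"
  by (simp add: \<omega>_def power2_eq_square complex_eq_iff real_sqrt_mult_self)

lemma omega_cube: "\<omega> ^ 3 = 1"
proof -
  have "\<omega> ^ 3 = \<omega> ^ 2 * \<omega>" by (simp add: power3_eq_cube power2_eq_square)
  then show ?thesis unfolding omega_square by (simp add: \<omega>_def complex_eq_iff real_sqrt_mult_self)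
qed

lemma omega_power_mod: "\<omega> ^ n = \<omega> ^ (n mod 3)"
proof -
  have "\<omega> ^ n = \<omega> ^ (3 * (n div 3) + n mod 3)" by simp
  also have "\<dots> = (\<omega> ^ 3) ^ (n div 3) * \<omega> ^ (n mod 3)" by (simp only: power_add power_mult)
  finally
  show ?thesis by (simp add: omega_cube)
qed

lemma omega_power_cong: "[a = b] (mod 3) \<Longrightarrow> \<omega> ^ a = \<omega> ^ b"
  unfolding cong_def by (metis omega_power_mod)

lemma omega_power_eq_one_iff: "\<omega> ^ n = 1 \<longleftrightarrow> 3 dvd n"
proof -
  have "\<omega> \<noteq> 1" "\<omega> ^ 2 \<noteq> 1" unfolding omega_square by (simp_all add: \<omega>_def complex_eq_iff)
  moreover have "n mod 3 = 0 \<or> n mod 3 = 1 \<or> n mod 3 = 2" by arith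
  ultimately show ?thesis by (subst omega_power_mod) (auto simp: mod_eq_0_iff_dvd)
qed

lemma cube_root_of_unity:
  assumes "z ^ 3 = 1"
  shows "\<exists>a<3. z = \<omega> ^ a"
proof -
  have "(z - 1) * (z - \<omega>) * (z - \<omega> ^ 2) = z ^ 3 - (1 + \<omega> + \<omega> ^ 2) * z ^ 2 + (\<omega> + \<omega> ^ 2 + \<omega> ^ 3) * z - \<omega> ^ 3"
    by (simp add: algebra_simps power2_eq_square power3_eq_cube)
  also have "\<dots> = z ^ 3 - 1"
  proof -
    have sum: "1 + \<omega> + \<omega> ^ 2 = 0"
      unfolding omega_square by (simp add: \<omega>_def complex_eq_iff)
    have "\<omega> + \<omega> ^ 2 + \<omega> ^ 3 = \<omega> * (1 + \<omega> + \<omega> ^ 2)"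
      by (simp add: algebra_simps power2_eq_square power3_eq_cube)
    then show ?thesis unfolding sum omega_cube by simp
  qed
  finally have "(z - 1) * (z - \<omega>) * (z - \<omega> ^ 2) = 0" using assms by simp
  then have "z = \<omega> ^ 0 \<or> z = \<omega> ^ 1 \<or> z = \<omega> ^ 2" by auto
  moreover have "0 < (3::nat)" "1 < (3::nat)" "2 < (3::nat)" by simp_all
  ultimately show ?thesis by blast
qed

definition cycle012 :: "nat \<Rightarrow> nat" where
  "cycle012 = transpose 0 1 \<circ> transpose 1 2"

lemma cycle012_Alt: "3 \<le> p \<Longrightarrow> cycle012 \<in> Alt p"
  unfolding cycle012_def by (rule transpose_comp_transpose_in_Alt) auto

definition chi4 :: "(nat \<Rightarrow> nat) \<Rightarrow> complex" where
  "chi4 \<sigma> = \<omega> ^ dlog4 (\<sigma> 0) (\<sigma> 1)"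

lemma alt_character_chi4: "alt_character 4 chi4"
proof (rule alt_characterI)
  show "chi4 id = 1" by (simp add: chi4_def dlog4_def)
  fix \<sigma> \<tau> assume \<sigma>: "\<sigma> \<in> Alt 4" and \<tau>: "\<tau> \<in> Alt 4"
  have "\<tau> 0 < 4" "\<tau> 1 < 4" "\<tau> 0 \<noteq> \<tau> 1"
    using Alt_apply_less[OF \<tau>] permutes_inj[OF Alt_permutes[OF \<tau>]] by (auto dest: injD)
  then have "[dlog4 (\<sigma> (\<tau> 0)) (\<sigma> (\<tau> 1)) = dlog4 (\<sigma> 0) (\<sigma> 1) + dlog4 (\<tau> 0) (\<tau> 1)] (mod 3)"
    using Alt4_semilinear4[OF \<sigma>] unfolding semilinear4_def by simp
  then show "chi4 (\<sigma> \<circ> \<tau>) = chi4 \<sigma> * chi4 \<tau>"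
    unfolding chi4_def by (simp add: omega_power_cong power_add)
qed

lemma chi4_cycle012: "chi4 cycle012 = \<omega> ^ 2"
  by (simp add: chi4_def cycle012_def dlog4_def)

lemma Alt4_involution_if_chi4_trivial:
  assumes \<sigma>: "\<sigma> \<in> Alt 4" and chi: "chi4 \<sigma> = 1"
  shows "\<sigma> \<circ> \<sigma> = id"
proof -
  have lt: "\<sigma> x < 4" if "x < 4" for x using Alt_apply_less[OF \<sigma> that] .
  have ne: "\<sigma> x \<noteq> \<sigma> y" if "x \<noteq> y" for x y
    using permutes_inj[OF Alt_permutes[OF \<sigma>]] that by (auto dest: injD)
  have "3 dvd dlog4 (\<sigma> 0) (\<sigma> 1)" "dlog4 (\<sigma> 0) (\<sigma> 1) < 3"
    using chi omega_power_eq_one_iff dlog4_less_3[OF lt lt ne] by (simp_all add: chi4_def)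
  then have D: "dlog4 (\<sigma> 0) (\<sigma> 1) = 0" by fastforce
  \<comment> \<open>\<open>\<sigma>\<close> is a translation \<open>x \<mapsto> x + \<sigma> 0\<close> of \<open>F\<^sub>4\<close>\<close>
  have translation: "\<sigma> x = xor x (\<sigma> 0)" if x: "x < 4" for x
  proof (cases "x = 0")
    case False
    then have "[dlog4 (\<sigma> x) (\<sigma> 0) = dlog4 x 0] (mod 3)"
      using Alt4_semilinear4[OF \<sigma>] x D unfolding semilinear4_def by simp
    then have "dlog4 (\<sigma> x) (\<sigma> 0) = dlog4 x 0"
      using cong_less_modulus_unique_nat dlog4_less_3 lt ne x False by fastforce
    moreover have "0 < xor (\<sigma> x) (\<sigma> 0)"
      using xor_less_4[OF lt[OF x] lt ne[OF False]] by simp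
    ultimately have "xor (\<sigma> x) (\<sigma> 0) = x"
      using False by (simp add: dlog4_def)
    then show ?thesis by (metis xor_cancel_right)
  qed simp
  show ?thesis
  proof
    fix x show "(\<sigma> \<circ> \<sigma>) x = id x"
    proof (cases "x < 4")
      case True
      then show ?thesis using translation[OF lt[OF True]] translation[OF True] by (simp add: xor_cancel_right)
    qed (simp add: Alt_apply_outside[OF \<sigma>])
  qed
qed

lemma alt_character_4_trivial_if_cycle012:
  assumes \<psi>: "alt_character 4 \<psi>" and cycle: "\<psi> cycle012 = 1" and \<sigma>: "\<sigma> \<in> Alt 4"
  shows "\<psi> \<sigma> = 1"
proof -
  \<comment> \<open>\<open>\<sigma>\<close> times a power of \<open>cycle012\<close> lies in the kernel of \<open>chi4\<close>, which consists of involutions\<close>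
  define d where "d = dlog4 (\<sigma> 0) (\<sigma> 1)"
  define v where "v = \<sigma> \<circ> cycle012 ^^ d"
  have c: "cycle012 \<in> Alt 4" "cycle012 ^^ d \<in> Alt 4" by (simp_all add: cycle012_Alt Alt_funpow)
  then have v: "v \<in> Alt 4" unfolding v_def using \<sigma> by (rule_tac Alt_comp) auto
  have "chi4 v = chi4 \<sigma> * chi4 cycle012 ^ d"
    using alt_character_comp[OF alt_character_chi4 \<sigma> c(2)] alt_character_funpow[OF alt_character_chi4 c(1)]
    by (simp add: v_def)
  also have "\<dots> = \<omega> ^ (d + 2 * d)"
    unfolding chi4_cycle012 by (simp only: chi4_def d_def power_add power_mult)
  finally have "chi4 v = \<omega> ^ (3 * d)" by simp
  then have "v \<circ> v = id" using Alt4_involution_if_chi4_trivial[OF v] omega_power_eq_one_iff by simp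
  then have "\<psi> v ^ 2 = 1"
    using alt_character_comp[OF \<psi> v v] alt_character_id[OF \<psi>] by (simp add: power2_eq_square)
  then have "\<psi> v = 1"
    using power_eq_one_if_coprime_exponents[of "\<psi> v" 3 2] alt_character_cube[OF \<psi> v] by simp
  then show ?thesis
    using alt_character_comp[OF \<psi> \<sigma> c(2)] alt_character_funpow[OF \<psi> c(1)] cycle by (simp add: v_def)
qed

section \<open>The group \<open>H\<^sup>1(Alt 5, X\<^sub>3)\<close>\<close>

definition omega_log :: "complex \<Rightarrow> int" where
  "omega_log z = (if z = 1 then 0 else if z = \<omega> then 1 else 2)"

lemma omega_log_power: "omega_log (\<omega> ^ a) = int (a mod 3)"
proof -
  have "\<omega> \<noteq> 1" "\<omega> ^ 2 \<noteq> 1"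
    using omega_power_eq_one_iff[of 1] omega_power_eq_one_iff[of 2] by simp_all
  moreover have "\<omega> \<noteq> 0" by (simp add: \<omega>_def complex_eq_iff)
  ultimately have "\<omega> ^ 2 \<noteq> \<omega>" by (simp add: power2_eq_square)
  moreover have "a mod 3 = 0 \<or> a mod 3 = 1 \<or> a mod 3 = 2" by arith
  ultimately show ?thesis using \<open>\<omega> \<noteq> 1\<close> \<open>\<omega> ^ 2 \<noteq> 1\<close>
    by (subst omega_power_mod) (auto simp: omega_log_def)
qed

definition cycle012_code :: "((nat \<Rightarrow> nat) \<Rightarrow> nat \<Rightarrow> complex) \<Rightarrow> int" where
  "cycle012_code f = omega_log (f cycle012 4)"

lemma Z1_restriction_omega_power:
  assumes "f \<in> Z1 M (Suc n)" "M \<subseteq> Dq (Suc n) q" "h \<in> Alt n"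
  shows "\<exists>a. f h n = \<omega> ^ a"
  using alt_character_cube[OF alt_character_restrict[OF assms(1,2)] assms(3)] cube_root_of_unity
  by blast

lemma Z1_Xq_5_3_cycle012_omega_power: "f \<in> Z1 (Xq 5 3) 5 \<Longrightarrow> \<exists>a. f cycle012 4 = \<omega> ^ a"
  using Z1_restriction_omega_power[of f "Xq 5 3" 4 3] Xq_Dq cycle012_Alt[of 4] by (simp add: subset_eq)

lemma Z1_Xq_5_3_in_B1_if_trivial_at_cycle012:
  assumes f: "f \<in> Z1 (Xq 5 3) 5" and trivial: "f cycle012 4 = 1"
  shows "f \<in> B1 (Xq 5 3) 5"
proof -
  have "Xq 5 3 \<subseteq> Dq 5 3" using Xq_Dq by blast
  then have fD: "f \<in> Z1 (Dq (Suc 4) 3) (Suc 4)" using f Z1_mono by (simp add: subset_iff)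
  have "f h 4 = 1" if "h \<in> Alt 4" for h
    using alt_character_4_trivial_if_cycle012[OF alt_character_restrict[OF fD order_refl]] trivial that
    by simp
  then obtain m where m: "m \<in> Dq 5 3" "\<forall>\<sigma>\<in>Alt 5. f \<sigma> = coboundary m \<sigma>"
    using Z1_coboundary_if_restriction_trivial[OF fD] by auto
  have "coprime (5::nat) 3" by (rule primes_coprime) simp_all
  then obtain m' where "m' \<in> Xq 5 3" "\<forall>\<sigma>\<in>Alt 5. coboundary m' \<sigma> = coboundary m \<sigma>"
    using Dq_coboundary_eq_Xq_coboundary[OF _ _ m(1)] by auto
  then show ?thesis using B1I[OF f] m(2) by simp
qed

lemma cycle012_code_hom: "cycle012_code \<in> hom (Z1_group (Xq 5 3) 5) (integer_mod_group 3)"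
proof (rule homI)
  fix f assume "f \<in> carrier (Z1_group (Xq 5 3) 5)"
  then obtain a where "f cycle012 4 = \<omega> ^ a" using Z1_Xq_5_3_cycle012_omega_power by (auto simp: Z1_group_def)
  then show "cycle012_code f \<in> carrier (integer_mod_group 3)"
    by (simp add: cycle012_code_def omega_log_power carrier_integer_mod_group)
next
  fix f g assume "f \<in> carrier (Z1_group (Xq 5 3) 5)" "g \<in> carrier (Z1_group (Xq 5 3) 5)"
  then obtain a b where "f cycle012 4 = \<omega> ^ a" "g cycle012 4 = \<omega> ^ b"
    using Z1_Xq_5_3_cycle012_omega_power by (auto simp: Z1_group_def) blast
  then show "cycle012_code (f \<otimes>\<^bsub>Z1_group (Xq 5 3) 5\<^esub> g) =
      cycle012_code f \<otimes>\<^bsub>integer_mod_group 3\<^esub> cycle012_code g"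
    by (simp add: Z1_group_def cycle012_code_def omega_log_power flip: power_add)
      (simp add: mod_add_eq zmod_int)
qed

lemma kernel_cycle012_code:
  "kernel (Z1_group (Xq 5 3) 5) (integer_mod_group 3) cycle012_code = B1 (Xq 5 3) 5"
proof
  show "kernel (Z1_group (Xq 5 3) 5) (integer_mod_group 3) cycle012_code \<subseteq> B1 (Xq 5 3) 5"
  proof
    fix f assume "f \<in> kernel (Z1_group (Xq 5 3) 5) (integer_mod_group 3) cycle012_code"
    then have f: "f \<in> Z1 (Xq 5 3) 5" and code: "cycle012_code f = 0"
      by (auto simp: kernel_def Z1_group_def)
    obtain a where "f cycle012 4 = \<omega> ^ a" using Z1_Xq_5_3_cycle012_omega_power[OF f] ..
    then have "f cycle012 4 = 1"
      using code by (simp add: cycle012_code_def omega_log_power omega_power_eq_one_iff mod_eq_0_iff_dvd)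
    then show "f \<in> B1 (Xq 5 3) 5" by (rule Z1_Xq_5_3_in_B1_if_trivial_at_cycle012[OF f])
  qed
  show "B1 (Xq 5 3) 5 \<subseteq> kernel (Z1_group (Xq 5 3) 5) (integer_mod_group 3) cycle012_code"
  proof
    fix f assume f: "f \<in> B1 (Xq 5 3) 5"
    then obtain m where "m \<in> Xq 5 3" "f cycle012 = coboundary m cycle012"
      unfolding B1_def using cycle012_Alt[of 5] by auto
    moreover have "inv' cycle012 4 = 4" using Alt_apply_outside[OF Alt_inv[OF cycle012_Alt[of 4]]] by simp
    ultimately have "f cycle012 4 = 1" using Dq_nonzero[OF Xq_Dq] by (simp add: act_def)
    moreover have "f \<in> Z1 (Xq 5 3) 5"
      using f B1_subset_Z1[of "Xq 5 3" 5 3] Xq_Dq coboundary_Xq by blast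
    ultimately show "f \<in> kernel (Z1_group (Xq 5 3) 5) (integer_mod_group 3) cycle012_code"
      by (simp add: kernel_def Z1_group_def cycle012_code_def omega_log_def)
  qed
qed

lemma cycle012_code_surj:
  "cycle012_code ` carrier (Z1_group (Xq 5 3) 5) = carrier (integer_mod_group 3)"
proof
  show "cycle012_code ` carrier (Z1_group (Xq 5 3) 5) \<subseteq> carrier (integer_mod_group 3)"
    using cycle012_code_hom by (auto simp: hom_def)
  let ?F = "induced 4 chi4"
  have F: "?F \<in> Z1 (Xq 5 3) 5"
    using induced_Z1_Xq[OF alt_character_chi4, of 3 1] alt_character_cube[OF alt_character_chi4] by simp
  have "?F cycle012 4 = \<omega> ^ 2" using induced_last[OF _ cycle012_Alt[of 4]] chi4_cycle012 by simp
  then have "cycle012_code ?F = 2" "cycle012_code (\<lambda>\<sigma> i. ?F \<sigma> i * ?F \<sigma> i) = 1"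
    by (simp_all add: cycle012_code_def omega_log_power flip: power_add)
  moreover have "cycle012_code (\<lambda>\<sigma> i. 1) = 0" by (simp add: cycle012_code_def omega_log_def)
  moreover have "?F \<in> carrier (Z1_group (Xq 5 3) 5)" "(\<lambda>\<sigma> i. ?F \<sigma> i * ?F \<sigma> i) \<in> carrier (Z1_group (Xq 5 3) 5)"
    "(\<lambda>\<sigma> i. 1) \<in> carrier (Z1_group (Xq 5 3) 5)"
    using F Z1_Xq_mult[OF F F] Z1_Xq_one by (simp_all add: Z1_group_def)
  ultimately have "{0, 1, 2} \<subseteq> cycle012_code ` carrier (Z1_group (Xq 5 3) 5)"
    by (auto intro!: rev_image_eqI)
  moreover have "carrier (integer_mod_group 3) = {0, 1, 2}" by (auto simp: carrier_integer_mod_group)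
  ultimately show "carrier (integer_mod_group 3) \<subseteq> cycle012_code ` carrier (Z1_group (Xq 5 3) 5)"
    by simp
qed

theorem H1_Xq_5_3: "H1 (Xq 5 3) 5 \<cong> integer_mod_group 3"
proof -
  interpret group_hom "Z1_group (Xq 5 3) 5" "integer_mod_group 3" cycle012_code
    by (simp add: group_hom_def group_hom_axioms_def group_Z1_group_Xq cycle012_code_hom)
  show ?thesis
    using FactGroup_iso[OF cycle012_code_surj] by (simp add: H1_def kernel_cycle012_code)
qed

theorem lemma8p2:
  fixes p :: nat
  assumes "Factorial_Ring.prime p" and "p \<ge> 5"
  shows "(p = 5 \<longrightarrow> H1 (Xq 5 3) 5 \<cong> integer_mod_group 3) \<and>
         (\<forall>q::nat. Factorial_Ring.prime q \<and> (p, q) \<noteq> (5, 3) \<longrightarrow> Z1 (Dq p q) p = B1 (Dq p q) p)"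
proof (intro conjI allI impI)
  fix q :: nat assume q: "Factorial_Ring.prime q \<and> (p, q) \<noteq> (5, 3)"
  have "\<not> 3 dvd q" if "p = 5"
    using q that primes_dvd_imp_eq[of 3 q] by auto
  then show "Z1 (Dq p q) p = B1 (Dq p q) p" using Z1_Dq_eq_B1 assms(2) by blast
qed (rule H1_Xq_5_3)

end
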